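(* Let $P^{(1)},\dots,P^{(m)}$ be phase-free $n$-qubit Pauli strings given in sparse form, with weights $w_i=\operatorname{wt}(P^{(i)})$. In the computational model where dictionary lookup and update for a key of length $r$ cost $O(r)$ expected time, the locality-zeta counting algorithm (which for $i=1,\dots,m$ computes $c_i=(N-Z)/2$ with $Z=\sum_{A\subseteq\operatorname{supp}(P^{(i)})}(-2)^{|A|}\sum_{a\in\mathcal{L}_{P^{(i)}}(A)}D[(A,a)]$, adds $c_i$ to a running total, then increments $D[(A,P^{(i)}|_A)]$ for every $A\subseteq\operatorname{supp}(P^{(i)})$ and increments $N$; and returns the total, which is the number of unordered anticommuting pairs) runs in expected time \[ O\Big(\sum_{i=1}^m w_i3^{w_i}\Big) \] and uses space $O\big(\sum_{i=1}^m w_i2^{w_i}\big)$ for dictionary keys in addition to the input storage. In particular, if $w_i\le k$ for all $i$, the expected time is $O(mk3^k)$ and the additional space is $O(mk2^k)$.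
   Context: A phase-free $n$-qubit Pauli string is $P=(P_1,\dots,P_n)\in\{I,X,Y,Z\}^n$, stored sparsely as the pairs $(j,P_j)$, $j\in\operatorname{supp}(P)=\{j:P_j\neq I\}$; $\operatorname{wt}(P)=|\operatorname{supp}(P)|$. $D$ is a dictionary (initially empty, absent keys count as zero) with keys labeled patterns $(A,a)$, $A$ a set of positions, $a:A\to\{X,Y,Z\}$, of length $|A|$; $N$ starts at $0$. $\mathcal{L}_P(A)=\{a:A\to\{X,Y,Z\}: a(j)\neq P_j\ \forall j\in A\}$, and $P|_A$ is the labeling $j\mapsto P_j$ on $A$. *)

theory Defs
  imports Complex_Main
begin

datatype pauli = I | X | Y | Z

text \<open>A labeled
 pattern (A,a) with a : A -> {X,Y,Z} is represented by the Pauli string that equals a on A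
 and I elsewhere; its support is A, and its length is card A.\<close>
type_synonym pstring = "nat \<Rightarrow> pauli"

definition supp :: "pstring \<Rightarrow> nat set" where
  "supp P = {j. P j \<noteq> I}"

definition wt :: "pstring \<Rightarrow> nat" where
  "wt P = card (supp P)"

definition restr :: "pstring \<Rightarrow> nat set \<Rightarrow> pstring" where
  "restr P A = (\<lambda>j. if j \<in> A then P j else I)"

definition labelings :: "pstring \<Rightarrow> nat set \<Rightarrow> pstring set" where
  "labelings P A = {a. supp a = A \<and> (\<forall>j\<in>A. a j \<noteq> P j)}"

record state =
  Dict :: "pstring \<Rightarrow> int"
  Ncnt :: int
  Total :: int
  Time :: real
  Keys :: "pstring set"

definition init_state :: state where
  "init_state = \<lparr>Dict = (\<lambda>_. 0), Ncnt = 0, Total = 0, Time = 0, Keys = {}\<rparr>"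

text \<open>One iteration of the locality-zeta counting algorithm on string P. Each dictionary
 lookup/update with a key of length r is charged dcost r (its expected cost); each
 iteration is additionally charged one unit for the remaining constant work.\<close>
definition step :: "(nat \<Rightarrow> real) \<Rightarrow> state \<Rightarrow> pstring \<Rightarrow> state" where
  "step dcost st P =
    (let S = supp P;
         D = Dict st;
         Zv = (\<Sum>A\<in>Pow S. (-2) ^ card A * (\<Sum>a\<in>labelings P A. D a));
         ci = (Ncnt st - Zv) div 2;
         lookup_time = (\<Sum>A\<in>Pow S. \<Sum>a\<in>labelings P A. dcost (card A));
         upd_keys = restr P ` Pow S;
         update_time = (\<Sum>A\<in>Pow S. dcost (card A));
         D' = (\<lambda>k. if k \<in> upd_keys then D k + 1 else D k)
     in \<lparr>Dict = D', Ncnt = Ncnt st + 1, Total = Total st + ci,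
         Time = Time st + lookup_time + update_time + 1,
         Keys = Keys st \<union> upd_keys\<rparr>)"

definition run :: "(nat \<Rightarrow> real) \<Rightarrow> pstring list \<Rightarrow> state" where
  "run dcost Ps = foldl (step dcost) init_state Ps"

definition key_space :: "state \<Rightarrow> nat" where
  "key_space st = (\<Sum>k\<in>Keys st. card (supp k))"

end

theory Submission
  imports Defs "HOL-Library.FuncSet"
begin

text \<open>An iteration on a string P of weight w visits every A \<subseteq> supp P, looks up the
 2^|A| labelings avoiding P on A and updates one key, each at cost O(|A| + 1) \<le> O(w + 1).
 Since \<Sum>A \<subseteq> S. 2^|A| = 3^|S|, the iteration costs O((w + 1) 3^w), independently of the
 dictionary contents, and it stores the 2^w keys P|_A, each of length at most w.\<close>

lemma UNIV_pauli: "(UNIV :: pauli set) = {I, X, Y, Z}"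
  using pauli.exhaust by blast

lemma card_labelings_le:
  assumes "A \<subseteq> supp P" and "finite A"
  shows "card (labelings P A) \<le> 2 ^ card A"
proof -
  let ?choices = "PiE A (\<lambda>j. UNIV - {P j, I})"
  have "inj_on (\<lambda>a. restrict a A) (labelings P A)"
  proof (rule inj_onI, rule ext)
    fix a b x
    assume "a \<in> labelings P A" "b \<in> labelings P A" "restrict a A = restrict b A"
    then show "a x = b x"
      by (cases "x \<in> A") (auto simp: labelings_def supp_def dest: fun_cong[of _ _ x])
  qed
  moreover have "(\<lambda>a. restrict a A) ` labelings P A \<subseteq> ?choices"
    by (auto simp: labelings_def supp_def)
  moreover have "finite ?choices"
    using assms(2) by (intro finite_PiE) (auto simp: UNIV_pauli)
  ultimately have "card (labelings P A) \<le> card ?choices"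
    by (rule card_inj_on_le)
  also have "card ?choices = (\<Prod>j\<in>A. card (UNIV - {P j, I}))"
    using assms(2) by (rule card_PiE)
  also have "\<dots> = (\<Prod>j\<in>A. 2)"
  proof (rule prod.cong)
    fix j assume "j \<in> A"
    then have "P j \<noteq> I" using assms(1) by (auto simp: supp_def)
    then show "card (UNIV - {P j, I}) = 2" by (cases "P j") (auto simp: UNIV_pauli)
  qed simp
  finally show ?thesis by simp
qed

lemma sum_Pow_power_card:
  fixes x :: "'a :: comm_semiring_1"
  assumes "finite S"
  shows "(\<Sum>A\<in>Pow S. x ^ card A) = (x + 1) ^ card S"
  using prod_add[OF assms, of "\<lambda>_. x" "\<lambda>_. 1"] by simp

lemma supp_restr: "A \<subseteq> supp P \<Longrightarrow> supp (restr P A) = A"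
  by (auto simp: supp_def restr_def)

definition iteration_time :: "(nat \<Rightarrow> real) \<Rightarrow> pstring \<Rightarrow> real" where
  "iteration_time dcost P =
     (\<Sum>A\<in>Pow (supp P). \<Sum>a\<in>labelings P A. dcost (card A)) + (\<Sum>A\<in>Pow (supp P). dcost (card A)) + 1"

lemma Time_step: "Time (step dcost st P) = Time st + iteration_time dcost P"
  by (simp add: step_def iteration_time_def Let_def)

lemma Keys_step: "Keys (step dcost st P) = Keys st \<union> restr P ` Pow (supp P)"
  by (simp add: step_def Let_def)

lemma run_snoc: "run dcost (Ps @ [P]) = step dcost (run dcost Ps) P"
  by (simp add: run_def)

lemma Time_run: "Time (run dcost Ps) = (\<Sum>P\<leftarrow>Ps. iteration_time dcost P)"
  by (induction Ps rule: rev_induct) (simp_all add: run_def init_state_def Time_step)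

lemma Keys_run: "Keys (run dcost Ps) = (\<Union>P\<in>set Ps. restr P ` Pow (supp P))"
  by (induction Ps rule: rev_induct) (auto simp: run_def init_state_def Keys_step)

lemma iteration_time_le_uniform:
  assumes fin: "finite (supp P)" and dcost: "\<forall>r \<le> wt P. 0 \<le> dcost r \<and> dcost r \<le> b"
  shows "iteration_time dcost P \<le> 2 * b * 3 ^ wt P + 1"
proof -
  let ?S = "supp P"
  have card_le: "card A \<le> wt P" if "A \<in> Pow ?S" for A
    using that fin by (auto simp: wt_def intro: card_mono)
  have b: "0 \<le> b" using dcost by auto
  have "(\<Sum>A\<in>Pow ?S. \<Sum>a\<in>labelings P A. dcost (card A)) \<le> (\<Sum>A\<in>Pow ?S. 2 ^ card A * b)"
  proof (rule sum_mono)
    fix A assume A: "A \<in> Pow ?S"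
    then have "real (card (labelings P A)) \<le> 2 ^ card A"
      using card_labelings_le[of A P] fin finite_subset by fastforce
    then show "(\<Sum>a\<in>labelings P A. dcost (card A)) \<le> 2 ^ card A * b"
      using dcost card_le[OF A] by (simp add: mult_mono)
  qed
  also have "\<dots> = b * 3 ^ wt P"
    using sum_Pow_power_card[OF fin, of "2 :: real"]
    by (simp add: sum_distrib_left[symmetric] wt_def mult.commute)
  finally have lookup: "(\<Sum>A\<in>Pow ?S. \<Sum>a\<in>labelings P A. dcost (card A)) \<le> b * 3 ^ wt P" .
  have "(\<Sum>A\<in>Pow ?S. dcost (card A)) \<le> (\<Sum>A\<in>Pow ?S. b)"
    using dcost card_le by (intro sum_mono) auto
  also have "\<dots> = b * 2 ^ wt P"
    using fin by (simp add: card_Pow wt_def mult.commute)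
  also have "\<dots> \<le> b * 3 ^ wt P"
    using b by (intro mult_left_mono power_mono) auto
  finally have update: "(\<Sum>A\<in>Pow ?S. dcost (card A)) \<le> b * 3 ^ wt P" .
  show ?thesis
    using lookup update by (simp add: iteration_time_def)
qed

lemma succ_mult_power_le_max:
  fixes b :: real
  assumes "0 \<le> b"
  shows "(real w + 1) * b ^ w \<le> 2 * max 1 (real w * b ^ w)"
proof (cases "w = 0")
  case False
  then have "b ^ w \<le> real w * b ^ w"
    using assms by (simp add: mult_le_cancel_right1)
  then show ?thesis by (simp add: algebra_simps)
qed simp

lemma iteration_time_le:
  assumes dcost: "\<forall>r. 0 \<le> dcost r \<and> dcost r \<le> c * (real r + 1)" and fin: "finite (supp P)"
  shows "iteration_time dcost P \<le> (4 * c + 1) * max 1 (real (wt P) * 3 ^ wt P)"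
proof -
  have c: "0 \<le> c" using dcost[rule_format, of 0] by simp
  have "\<forall>r \<le> wt P. 0 \<le> dcost r \<and> dcost r \<le> c * (real (wt P) + 1)"
    using dcost c by (auto intro: order_trans[OF _ mult_left_mono])
  then have "iteration_time dcost P \<le> 2 * (c * (real (wt P) + 1)) * 3 ^ wt P + 1"
    by (rule iteration_time_le_uniform[OF fin])
  also have "\<dots> = 2 * c * ((real (wt P) + 1) * 3 ^ wt P) + 1"
    by (simp add: algebra_simps)
  also have "\<dots> \<le> 2 * c * (2 * max 1 (real (wt P) * 3 ^ wt P)) + 1"
    using c succ_mult_power_le_max[of 3] by (intro add_right_mono mult_left_mono) auto
  also have "\<dots> \<le> (4 * c + 1) * max 1 (real (wt P) * 3 ^ wt P)"
    by (simp add: algebra_simps)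
  finally show ?thesis .
qed

lemma Time_run_le:
  assumes "\<forall>r. 0 \<le> dcost r \<and> dcost r \<le> c * (real r + 1)" and "\<forall>P\<in>set Ps. finite (supp P)"
  shows "Time (run dcost Ps) \<le> (4 * c + 1) * (\<Sum>P\<leftarrow>Ps. max 1 (real (wt P) * 3 ^ wt P))"
proof -
  have "Time (run dcost Ps) \<le> (\<Sum>P\<leftarrow>Ps. (4 * c + 1) * max 1 (real (wt P) * 3 ^ wt P))"
    unfolding Time_run using assms iteration_time_le by (intro sum_list_mono) auto
  then show ?thesis by (simp add: sum_list_const_mult)
qed

lemma key_space_iteration_le:
  assumes "finite (supp P)"
  shows "(\<Sum>k\<in>restr P ` Pow (supp P). card (supp k)) \<le> wt P * 2 ^ wt P"
proof -
  have "(\<Sum>k\<in>restr P ` Pow (supp P). card (supp k)) \<le> (\<Sum>A\<in>Pow (supp P). card (supp (restr P A)))"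
    using sum_image_le[of "Pow (supp P)" "\<lambda>k. card (supp k)" "restr P"] assms by (simp add: o_def)
  also have "\<dots> = (\<Sum>A\<in>Pow (supp P). card A)"
    by (intro sum.cong) (auto simp: supp_restr)
  also have "\<dots> \<le> (\<Sum>A\<in>Pow (supp P). wt P)"
    unfolding wt_def using assms by (intro sum_mono card_mono) auto
  also have "\<dots> = wt P * 2 ^ wt P"
    using assms by (simp add: card_Pow wt_def)
  finally show ?thesis .
qed

lemma key_space_run_le:
  assumes "\<forall>P\<in>set Ps. finite (supp P)"
  shows "real (key_space (run dcost Ps)) \<le> (\<Sum>P\<leftarrow>Ps. max 1 (real (wt P) * 2 ^ wt P))"
  using assms
proof (induction Ps rule: rev_induct)
  case Nil
  then show ?case by (simp add: run_def init_state_def key_space_def)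
next
  case (snoc P Ps)
  let ?new = "restr P ` Pow (supp P)"
  have "finite (Keys (run dcost Ps))" and "finite ?new"
    using snoc.prems by (auto simp: Keys_run)
  then have "key_space (run dcost (Ps @ [P])) \<le> key_space (run dcost Ps) + (\<Sum>k\<in>?new. card (supp k))"
    by (simp add: key_space_def run_snoc Keys_step sum_Un_nat)
  also have "\<dots> \<le> key_space (run dcost Ps) + wt P * 2 ^ wt P"
    using snoc.prems key_space_iteration_le[of P] by simp
  finally have "real (key_space (run dcost (Ps @ [P])))
      \<le> real (key_space (run dcost Ps) + wt P * 2 ^ wt P)"
    by (rule of_nat_mono)
  then show ?case
    using snoc by simp
qed

lemma sum_list_max_one_mult_power_le:
  fixes b :: real
  assumes "1 \<le> b" and "\<forall>P\<in>set Ps. wt P \<le> k"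
  shows "(\<Sum>P\<leftarrow>Ps. max 1 (real (wt P) * b ^ wt P)) \<le> real (length Ps) * max 1 (real k * b ^ k)"
proof -
  have "max 1 (real (wt P) * b ^ wt P) \<le> max 1 (real k * b ^ k)" if "P \<in> set Ps" for P
  proof -
    have "real (wt P) * b ^ wt P \<le> real k * b ^ k"
      using assms that by (intro mult_mono power_increasing) auto
    then show ?thesis by simp
  qed
  then have "(\<Sum>P\<leftarrow>Ps. max 1 (real (wt P) * b ^ wt P)) \<le> (\<Sum>P\<leftarrow>Ps. max 1 (real k * b ^ k))"
    by (rule sum_list_mono)
  then show ?thesis by (simp add: sum_list_triv)
qed

theorem theorem3:
  fixes dcost :: "nat \<Rightarrow> real" and c :: real
  assumes "\<forall>r. 0 \<le> dcost r \<and> dcost r \<le> c * (real r + 1)"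
  shows "\<exists>C>0. \<forall>(n::nat) (Ps::pstring list).
     (\<forall>P\<in>set Ps. supp P \<subseteq> {..<n}) \<longrightarrow>
       Time (run dcost Ps) \<le> C * (\<Sum>P\<leftarrow>Ps. max 1 (real (wt P) * 3 ^ wt P))
     \<and> real (key_space (run dcost Ps)) \<le> C * (\<Sum>P\<leftarrow>Ps. max 1 (real (wt P) * 2 ^ wt P))
     \<and> (\<forall>k::nat. (\<forall>P\<in>set Ps. wt P \<le> k) \<longrightarrow>
          Time (run dcost Ps) \<le> C * real (length Ps) * max 1 (real k * 3 ^ k)
        \<and> real (key_space (run dcost Ps)) \<le> C * real (length Ps) * max 1 (real k * 2 ^ k))"
proof -
  have c: "0 \<le> c" using assms[rule_format, of 0] by simp
  define C where "C = 4 * c + 1"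
  have C: "1 \<le> C" using c by (simp add: C_def)
  show ?thesis
  proof (intro exI[of _ C] conjI allI impI)
    fix n :: nat and Ps :: "pstring list" and k :: nat
    assume "\<forall>P\<in>set Ps. supp P \<subseteq> {..<n}"
    then have fin: "\<forall>P\<in>set Ps. finite (supp P)"
      using finite_subset by blast
    show time: "Time (run dcost Ps) \<le> C * (\<Sum>P\<leftarrow>Ps. max 1 (real (wt P) * 3 ^ wt P))"
      unfolding C_def using Time_run_le[OF assms fin] .
    have "0 \<le> (\<Sum>P\<leftarrow>Ps. max 1 (real (wt P) * 2 ^ wt P))"
      by (intro sum_list_nonneg) auto
    then show space: "real (key_space (run dcost Ps)) \<le> C * (\<Sum>P\<leftarrow>Ps. max 1 (real (wt P) * 2 ^ wt P))"
      using key_space_run_le[OF fin, of dcost] C by (smt (verit) mult_le_cancel_right1)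
    assume "\<forall>P\<in>set Ps. wt P \<le> k"
    then have "(\<Sum>P\<leftarrow>Ps. max 1 (real (wt P) * 3 ^ wt P)) \<le> real (length Ps) * max 1 (real k * 3 ^ k)"
      and "(\<Sum>P\<leftarrow>Ps. max 1 (real (wt P) * 2 ^ wt P)) \<le> real (length Ps) * max 1 (real k * 2 ^ k)"
      by (simp_all add: sum_list_max_one_mult_power_le)
    then show "Time (run dcost Ps) \<le> C * real (length Ps) * max 1 (real k * 3 ^ k)"
      and "real (key_space (run dcost Ps)) \<le> C * real (length Ps) * max 1 (real k * 2 ^ k)"
      using time space C by (simp_all add: mult.assoc order_trans[OF _ mult_left_mono])
  qed (use C in simp)
qed

end
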